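(* Let $\mathcal{M}$ and $\mathcal{N}$ be matroids on the same finite ground set $V$, and let $k\ge1$ be an integer. If $k\le\nu(\mathcal{M},\mathcal{N})-1$, then $\mathbf{RG}(\mathcal{M},\mathcal{N};k)$ is connected.
   Context: $\nu(\mathcal{M},\mathcal{N})$ is the maximum size of a set independent in both $\mathcal{M}$ and $\mathcal{N}$. $\mathbf{RG}(\mathcal{M},\mathcal{N};k)$ is the graph whose vertices are the common independent sets of $\mathcal{M}$ and $\mathcal{N}$ of cardinality $k$, two such sets $S,T$ being adjacent if $S\cup T$ is an independent set of $\mathcal{M}$ of cardinality $k+1$. *)

theory Defs
  imports Main
begin

definition matroid :: "'a set \<Rightarrow> ('a set \<Rightarrow> bool) \<Rightarrow> bool" where
  "matroid V indep \<longleftrightarrow>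
     finite V \<and>
     (\<forall>X. indep X \<longrightarrow> X \<subseteq> V) \<and>
     indep {} \<and>
     (\<forall>X Y. indep Y \<and> X \<subseteq> Y \<longrightarrow> indep X) \<and>
     (\<forall>X Y. indep X \<and> indep Y \<and> card X < card Y \<longrightarrow>
        (\<exists>y \<in> Y - X. indep (insert y X)))"

definition common_indep :: "('a set \<Rightarrow> bool) \<Rightarrow> ('a set \<Rightarrow> bool) \<Rightarrow> 'a set \<Rightarrow> bool" where
  "common_indep M N X \<longleftrightarrow> M X \<and> N X"

definition nu :: "('a set \<Rightarrow> bool) \<Rightarrow> ('a set \<Rightarrow> bool) \<Rightarrow> nat" where
  "nu M N = Max {card X | X. common_indep M N X}"

definition RG_vertices :: "('a set \<Rightarrow> bool) \<Rightarrow> ('a set \<Rightarrow> bool) \<Rightarrow> nat \<Rightarrow> 'a set set" where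
  "RG_vertices M N k = {X. common_indep M N X \<and> card X = k}"

definition RG_edges :: "('a set \<Rightarrow> bool) \<Rightarrow> ('a set \<Rightarrow> bool) \<Rightarrow> nat \<Rightarrow> ('a set \<times> 'a set) set" where
  "RG_edges M N k = {(S, T). S \<in> RG_vertices M N k \<and> T \<in> RG_vertices M N k \<and>
                             M (S \<union> T) \<and> card (S \<union> T) = k + 1}"

definition graph_connected :: "'v set \<Rightarrow> ('v \<times> 'v) set \<Rightarrow> bool" where
  "graph_connected Vs E \<longleftrightarrow> Vs \<noteq> {} \<and>
     (\<forall>x\<in>Vs. \<forall>y\<in>Vs. (x, y) \<in> (E \<inter> (Vs \<times> Vs))\<^sup>*)"

end

theory Submission
  imports Defs
begin

text \<open>Fix a common independent set \<open>J\<close> with \<open>|J| = k + 1\<close>, which exists since \<open>k < \<nu>(M,N)\<close>.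
  Two distinct \<open>k\<close>-subsets of \<open>J\<close> have union \<open>J\<close>, so they are adjacent. Every other vertex
  \<open>S\<close> has a neighbour with fewer elements outside \<open>J\<close>: augment \<open>S\<close> in \<open>M\<close> by some
  \<open>z \<in> J - S\<close>, then extend \<open>(S \<inter> J) + z\<close> in \<open>N\<close> by elements of \<open>S\<close> to a \<open>k\<close>-set \<open>B\<close>.
  As \<open>B \<subseteq> S + z\<close>, the union \<open>S \<union> B = S + z\<close> is \<open>M\<close>-independent, and \<open>B\<close> misses
  some element of \<open>S - J\<close>.\<close>

lemma matroid_indep_empty: "matroid V M \<Longrightarrow> M {}"
  unfolding matroid_def by simp

lemma matroid_indep_subset_ground: "matroid V M \<Longrightarrow> M X \<Longrightarrow> X \<subseteq> V"
  unfolding matroid_def by blast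

lemma matroid_indep_finite: "matroid V M \<Longrightarrow> M X \<Longrightarrow> finite X"
  unfolding matroid_def by (meson finite_subset)

lemma matroid_indep_subset: "matroid V M \<Longrightarrow> M Y \<Longrightarrow> X \<subseteq> Y \<Longrightarrow> M X"
  unfolding matroid_def by blast

lemma matroid_augment:
  "matroid V M \<Longrightarrow> M X \<Longrightarrow> M Y \<Longrightarrow> card X < card Y \<Longrightarrow> \<exists>y \<in> Y - X. M (insert y X)"
  unfolding matroid_def by blast

lemma matroid_extend_to_card:
  assumes N: "matroid V N" and "N A" and NS: "N S" and "card A \<le> card S"
  shows "\<exists>B. N B \<and> A \<subseteq> B \<and> B \<subseteq> A \<union> S \<and> card B = card S"
  using assms(2,4)
proof (induction "card S - card A" arbitrary: A)
  case 0
  then show ?case by auto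
next
  case (Suc n)
  then have "card A < card S" by simp
  then obtain y where y: "y \<in> S - A" "N (insert y A)"
    using matroid_augment[OF N Suc.prems(1) NS] by blast
  have "card (insert y A) = Suc (card A)"
    using y matroid_indep_finite[OF N Suc.prems(1)] by simp
  with Suc.hyps(2) \<open>card A < card S\<close>
  have "n = card S - card (insert y A)" "card (insert y A) \<le> card S" by simp_all
  then obtain B where "N B" "insert y A \<subseteq> B" "B \<subseteq> insert y A \<union> S" "card B = card S"
    using Suc.hyps(1) y(2) by blast
  then show ?case using y by blast
qed

lemma common_indep_of_card:
  assumes M: "matroid V M" and N: "matroid V N" and "j \<le> nu M N"
  shows "\<exists>J. common_indep M N J \<and> card J = j"
proof -
  let ?sizes = "{card X | X. common_indep M N X}"
  have "finite V" using M unfolding matroid_def by blast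
  then have "card X \<le> card V" if "M X" for X
    using card_mono matroid_indep_subset_ground[OF M that] by blast
  then have "?sizes \<subseteq> {..card V}" unfolding common_indep_def by auto
  then have "finite ?sizes" by (rule finite_subset) simp
  moreover have "?sizes \<noteq> {}"
    using matroid_indep_empty[OF M] matroid_indep_empty[OF N] unfolding common_indep_def by blast
  ultimately have "Max ?sizes \<in> ?sizes" by (rule Max_in)
  then obtain X where X: "common_indep M N X" "card X = nu M N" unfolding nu_def by auto
  then obtain J where "J \<subseteq> X" "card J = j"
    using assms(3) obtain_subset_with_card_n[of j X] by auto
  with X show ?thesis
    using matroid_indep_subset[OF M] matroid_indep_subset[OF N] unfolding common_indep_def by blast
qed

lemma RG_edges_subset: "RG_edges M N k \<subseteq> RG_vertices M N k \<times> RG_vertices M N k"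
  unfolding RG_edges_def by auto

lemma sym_RG_edges: "sym (RG_edges M N k)"
  unfolding sym_def RG_edges_def by (auto simp: Un_commute)

lemma RG_vertices_subset:
  assumes "matroid V M" "matroid V N" "common_indep M N J" "T \<subseteq> J" "card T = k"
  shows "T \<in> RG_vertices M N k"
  using assms matroid_indep_subset unfolding RG_vertices_def common_indep_def by blast

lemma RG_edge_within_common_indep:
  assumes M: "matroid V M" and J: "common_indep M N J" "card J = k + 1"
    and T: "T1 \<in> RG_vertices M N k" "T2 \<in> RG_vertices M N k" "T1 \<subseteq> J" "T2 \<subseteq> J"
    and "T1 \<noteq> T2"
  shows "(T1, T2) \<in> RG_edges M N k"
proof -
  have fin: "finite J" using J M matroid_indep_finite unfolding common_indep_def by blast
  have card: "card T1 = k" "card T2 = k" using T unfolding RG_vertices_def by auto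
  have sub: "T1 \<union> T2 \<subseteq> J" using T by blast
  have "\<not> T2 \<subseteq> T1"
    using card_subset_eq[of T1 T2] card \<open>T1 \<noteq> T2\<close> T(3) fin finite_subset by auto
  then have "card T1 < card (T1 \<union> T2)"
    using sub fin by (intro psubset_card_mono) (auto intro: finite_subset)
  moreover have "card (T1 \<union> T2) \<le> card J" using sub fin by (rule card_mono[rotated])
  ultimately have "T1 \<union> T2 = J"
    using card_seteq[OF fin sub] card J(2) by simp
  then show ?thesis
    using J T unfolding RG_edges_def common_indep_def by auto
qed

lemma RG_edge_towards_common_indep:
  assumes M: "matroid V M" and N: "matroid V N"
    and J: "common_indep M N J" "card J = k + 1"
    and S: "S \<in> RG_vertices M N k" "\<not> S \<subseteq> J"
  shows "\<exists>B. (S, B) \<in> RG_edges M N k \<and> B - J \<subset> S - J"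
proof -
  have MS: "M S" and NS: "N S" and cardS: "card S = k" and MJ: "M J" and NJ: "N J"
    using S J unfolding RG_vertices_def common_indep_def by auto
  have finS: "finite S" using matroid_indep_finite[OF M MS] .
  obtain z where z: "z \<in> J - S" "M (insert z S)"
    using matroid_augment[OF M MS MJ] cardS J(2) by auto
  define A where "A = insert z (S \<inter> J)"
  have "N A" using matroid_indep_subset[OF N NJ] z unfolding A_def by auto
  moreover have "card (S \<inter> J) < card S"
    using S(2) finS by (intro psubset_card_mono) auto
  then have "card A \<le> card S" using z finS unfolding A_def by simp
  ultimately obtain B where B: "N B" "A \<subseteq> B" "B \<subseteq> A \<union> S" "card B = card S"
    using matroid_extend_to_card[OF N _ NS] by blast
  have B_sub: "B \<subseteq> insert z S" and "z \<in> B" using B(2,3) unfolding A_def by auto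
  then have union: "S \<union> B = insert z S" by blast
  have "B \<in> RG_vertices M N k"
    using matroid_indep_subset[OF M z(2) B_sub] B cardS unfolding RG_vertices_def common_indep_def by auto
  then have "(S, B) \<in> RG_edges M N k"
    using S(1) z finS cardS union unfolding RG_edges_def by auto
  moreover have "B - J \<subset> S - J"
  proof
    show "B - J \<subseteq> S - J" using B_sub z by blast
    show "B - J \<noteq> S - J"
    proof
      assume "B - J = S - J"
      then have "insert z S \<subseteq> B" using B(2) \<open>z \<in> B\<close> unfolding A_def by blast
      then have "card (insert z S) \<le> card B"
        using B_sub finS by (intro card_mono) (auto intro: finite_subset)
      then show False using B(4) z finS by simp
    qed
  qed
  ultimately show ?thesis by blast
qed

lemma RG_walk_into_common_indep:
  assumes M: "matroid V M" and N: "matroid V N"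
    and J: "common_indep M N J" "card J = k + 1"
    and S: "S \<in> RG_vertices M N k"
  shows "\<exists>T \<in> RG_vertices M N k. T \<subseteq> J \<and> (S, T) \<in> (RG_edges M N k)\<^sup>*"
  using S
proof (induction "card (S - J)" arbitrary: S rule: less_induct)
  case less
  show ?case
  proof (cases "S \<subseteq> J")
    case True
    with less.prems show ?thesis by blast
  next
    case False
    then obtain B where edge: "(S, B) \<in> RG_edges M N k" and closer: "B - J \<subset> S - J"
      using RG_edge_towards_common_indep[OF M N J less.prems] by blast
    have "finite S"
      using less.prems matroid_indep_finite[OF M] unfolding RG_vertices_def common_indep_def by blast
    then have "card (B - J) < card (S - J)" using closer by (simp add: psubset_card_mono)
    moreover have "B \<in> RG_vertices M N k" using edge RG_edges_subset by blast
    ultimately have "\<exists>T \<in> RG_vertices M N k. T \<subseteq> J \<and> (B, T) \<in> (RG_edges M N k)\<^sup>*"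
      by (rule less.hyps)
    then obtain T where T: "T \<in> RG_vertices M N k" "T \<subseteq> J" "(B, T) \<in> (RG_edges M N k)\<^sup>*"
      by blast
    with converse_rtrancl_into_rtrancl[OF edge T(3)] show ?thesis by blast
  qed
qed

lemma graph_connected_RG_if_common_indep:
  assumes M: "matroid V M" and N: "matroid V N"
    and J: "common_indep M N J" "card J = k + 1"
  shows "graph_connected (RG_vertices M N k) (RG_edges M N k)"
proof -
  let ?V = "RG_vertices M N k" and ?E = "RG_edges M N k"
  obtain T0 where "T0 \<subseteq> J" "card T0 = k"
    using J(2) obtain_subset_with_card_n[of k J] by auto
  then have nonempty: "?V \<noteq> {}" using RG_vertices_subset[OF M N J(1)] by blast
  have walk: "(S, T) \<in> ?E\<^sup>*" if "S \<in> ?V" "T \<in> ?V" for S T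
  proof -
    obtain S' where S': "S' \<in> ?V" "S' \<subseteq> J" "(S, S') \<in> ?E\<^sup>*"
      using RG_walk_into_common_indep[OF M N J \<open>S \<in> ?V\<close>] by blast
    obtain T' where T': "T' \<in> ?V" "T' \<subseteq> J" "(T, T') \<in> ?E\<^sup>*"
      using RG_walk_into_common_indep[OF M N J \<open>T \<in> ?V\<close>] by blast
    have "(S', T') \<in> ?E\<^sup>*"
    proof (cases "S' = T'")
      case False
      then show ?thesis
        by (intro r_into_rtrancl RG_edge_within_common_indep[OF M J S'(1) T'(1) S'(2) T'(2)])
    qed simp
    moreover have "(T', T) \<in> ?E\<^sup>*"
      using sym_rtrancl[OF sym_RG_edges] T'(3) by (rule symD)
    ultimately show ?thesis
      using S'(3) rtrancl_trans by metis
  qed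
  have "?E \<inter> ?V \<times> ?V = ?E" by (rule Int_absorb2[OF RG_edges_subset])
  then show ?thesis
    unfolding graph_connected_def using nonempty walk by auto
qed

theorem corollary5p4:
  fixes V :: "'a set" and M N :: "'a set \<Rightarrow> bool" and k :: nat
  assumes "matroid V M" and "matroid V N"
    and "k \<ge> 1" and "int k \<le> int (nu M N) - 1"
  shows "graph_connected (RG_vertices M N k) (RG_edges M N k)"
proof -
  obtain J where "common_indep M N J" "card J = k + 1"
    using common_indep_of_card[OF assms(1,2), of "k + 1"] assms(4) by auto
  then show ?thesis
    using graph_connected_RG_if_common_indep[OF assms(1,2)] by blast
qed

end
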